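(* Let $n\ge1$ and let $\mathcal P(n-1,1,2)$ be the set of lattice paths with steps $(1,1)$ (up) and $(1,-1)$ (down) from $(0,0)$ to $(2n,2)$ (so with $n+1$ up steps and $n-1$ down steps); the steps occupy positions $0,1,\dots,2n-1$, the step in position $m$ starting at the vertex reached after $m$ steps. (1) For $k>1$, among the paths in $\mathcal P(n-1,1,2)$ that start with a down step and have exactly $k-1$ even down steps, the number having exactly $j$ even down steps starting on or below the $x$-axis is independent of $j$ for $j=1,\dots,k-1$, and equals $\frac{1}{k-1}\binom{n}{k}\binom{n-1}{k-2}$. (2) Among the paths in $\mathcal P(n-1,1,2)$ that start with an up step and have exactly $k$ even up steps ($k\ge1$), the number having exactly $j$ even up steps starting on or below the $x$-axis is independent of $j$ for $j=1,\dots,k$, and equals $\frac1k\binom{n-1}{k-1}\binom{n}{k-1}$.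
   Context: An even up (down) step is an up (down) step in an even position. A step starts on or below the $x$-axis if its initial vertex has $y$-coordinate $\le0$. *)

theory Defs
  imports Complex_Main
begin

text \<open>A lattice path is a list of steps: True = up step (1,1), False = down step (1,-1).
  Steps occupy positions 0,...,length p - 1.\<close>

definition height :: "bool list \<Rightarrow> nat \<Rightarrow> int" where
  "height p m = (\<Sum>i<m. if p ! i then 1 else -1)"

definition paths :: "nat \<Rightarrow> bool list set" where
  "paths n = {p. length p = 2 * n \<and> length (filter id p) = n + 1}"

definition even_down :: "bool list \<Rightarrow> nat set" where
  "even_down p = {m. m < length p \<and> even m \<and> \<not> p ! m}"

definition even_up :: "bool list \<Rightarrow> nat set" where
  "even_up p = {m. m < length p \<and> even m \<and> p ! m}"

definition low_steps :: "bool list \<Rightarrow> nat set" where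
  "low_steps p = {m. m < length p \<and> height p m \<le> 0}"

end

theory Submission
  imports Defs
begin

text \<open>
  A path of \<open>P(n-1,1,2)\<close> ends at height 2, so rotating it to start at an even step \<open>r\<close> gives
  again such a path.  A step \<open>t\<close> of the rotated path starts on or below the axis iff
  \<open>height t \<le> height r\<close> when \<open>t\<close> comes after \<open>r\<close>, and iff \<open>height t + 2 \<le> height r\<close> when it
  wraps around; at even positions heights are even, so this says that \<open>t\<close> precedes \<open>r\<close> in the
  order "lower start first, later position first on ties".  Hence, if \<open>p\<close> has \<open>m\<close> even steps of
  a given direction, its \<open>m\<close> rotations to these steps have exactly \<open>1, \<dots>, m\<close> such steps
  starting low, each value once.  Double counting pairs (path, rotation) gives
  \<open>n \<cdot> #{paths starting with that direction, m even steps, j of them low}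
     = #{paths with m even steps}\<close>, and the right side is a product of two binomial
  coefficients, choosing the up steps at even and at odd positions independently.
\<close>

lemma height_Suc: "height p (Suc m) = height p m + (if p ! m then 1 else -1)"
  by (simp add: height_def)

lemma even_height_add: "even (height p m + int m)"
  by (induction m) (auto simp: height_def height_Suc)

lemma even_height: "even m \<Longrightarrow> even (height p m)"
  using even_height_add[of p m] by auto

lemma height_take:
  "m \<le> length p \<Longrightarrow> height p m = 2 * int (length (filter id (take m p))) - int m"
proof (induction m)
  case (Suc m)
  then show ?case by (auto simp: height_Suc take_Suc_conv_app_nth)
qed (simp add: height_def)

lemma height_length_paths: "p \<in> paths n \<Longrightarrow> height p (length p) = 2"
  using height_take[of "length p" p] by (simp add: paths_def)

lemma even_length_of_height: "height p (length p) = 2 \<Longrightarrow> even (length p)"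
  using even_height_add[of p "length p"] by simp

lemma height_rotate_before:
  assumes "i + r \<le> length p"
  shows "height (rotate r p) i = height p (i + r) - height p r"
  using assms
proof (induction i)
  case (Suc i)
  then have "rotate r p ! i = p ! (i + r)" by (simp add: nth_rotate add.commute)
  with Suc show ?case by (simp add: height_Suc)
qed (simp add: height_def)

lemma height_rotate_after:
  assumes "r \<le> length p" "d \<le> r"
  shows "height (rotate r p) (length p - r + d) = height p (length p) - height p r + height p d"
  using assms
proof (induction d)
  case 0 then show ?case using height_rotate_before[of "length p - r" r p] by (simp add: height_def)
next
  case (Suc d)
  then have "rotate r p ! (length p - r + d) = p ! d" by (simp add: nth_rotate)
  with Suc show ?case by (simp add: height_Suc)
qed

lemma add_mod_cancel_left_less:
  fixes i j L :: nat
  assumes "i < L" "j < L" "(r + i) mod L = (r + j) mod L"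
  shows "i = j"
proof -
  have "int ((r + i) mod L) = int ((r + j) mod L)" using assms(3) by simp
  then have "int i mod int L = int j mod int L"
    by (simp add: of_nat_mod mod_eq_dvd_iff)
  then show ?thesis using assms(1,2) by (simp add: of_nat_mod[symmetric])
qed

lemma bij_betw_add_mod: "bij_betw (\<lambda>i. (r + i) mod L) {..<L} {..<(L::nat)}"
proof (cases "L = 0")
  case False
  have "inj_on (\<lambda>i. (r + i) mod L) {..<L}"
    by (auto intro: inj_onI add_mod_cancel_left_less)
  moreover have "(\<lambda>i. (r + i) mod L) ` {..<L} = {..<L}"
    using False calculation by (intro endo_inj_surj) auto
  ultimately show ?thesis by (simp add: bij_betw_def)
qed simp

lemma card_rotated_indices:
  "card {i. i < L \<and> Q ((r + i) mod L)} = card {t. t < (L::nat) \<and> Q t}"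
proof -
  have "bij_betw (\<lambda>i. (r + i) mod L) {i \<in> {..<L}. Q ((r + i) mod L)} {t \<in> {..<L}. Q t}"
    by (rule bij_betw_Collect[OF bij_betw_add_mod]) simp
  then show ?thesis by (simp add: bij_betw_same_card)
qed

definition even_steps :: "bool \<Rightarrow> bool list \<Rightarrow> nat set" where
  "even_steps b p = {m. m < length p \<and> even m \<and> p ! m = b}"

lemma even_down_eq: "even_down = even_steps False"
  by (auto simp: even_down_def even_steps_def)

lemma even_up_eq: "even_up = even_steps True"
  by (auto simp: even_up_def even_steps_def)

lemma even_add_mod_iff: "even (L::nat) \<Longrightarrow> even r \<Longrightarrow> even ((r + i) mod L) \<longleftrightarrow> even i"
  by (simp add: dvd_mod_iff)

lemma rotate_in_paths:
  assumes "p \<in> paths n"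
  shows "rotate r p \<in> paths n"
proof -
  let ?L = "length p"
  have "length (filter id (rotate r p)) = card {i. i < ?L \<and> p ! ((r + i) mod ?L)}"
    unfolding length_filter_conv_card
    by (intro arg_cong[where f = card] Collect_cong) (auto simp: nth_rotate)
  also have "\<dots> = length (filter id p)"
    by (simp add: card_rotated_indices length_filter_conv_card)
  finally show ?thesis using assms by (simp add: paths_def)
qed

lemma card_even_steps_rotate:
  assumes "even r" "even (length p)"
  shows "card (even_steps b (rotate r p)) = card (even_steps b p)"
proof -
  let ?L = "length p"
  have "even_steps b (rotate r p) = {i. i < ?L \<and> (\<lambda>t. even t \<and> p ! t = b) ((r + i) mod ?L)}"
    using assms by (auto simp: even_steps_def nth_rotate even_add_mod_iff)
  then show ?thesis
    using card_rotated_indices[of ?L "\<lambda>t. even t \<and> p ! t = b" r] by (simp add: even_steps_def)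
qed

definition cycle_key :: "bool list \<Rightarrow> nat \<Rightarrow> int" where
  "cycle_key p t = height p t * int (length p + 1) - int t"

lemma cycle_key_le_iff:
  assumes "t < length p" "r < length p"
  shows "cycle_key p t \<le> cycle_key p r \<longleftrightarrow>
           height p t < height p r \<or> (height p t = height p r \<and> r \<le> t)"
proof -
  let ?c = "int (length p + 1)"
  have less: "a * ?c - int x < b * ?c - int y" if "a < b" "x < length p" "y < length p" for a b x y
  proof -
    have "a * ?c \<le> (b - 1) * ?c" using that by (intro mult_right_mono) auto
    then show ?thesis using that by (simp add: algebra_simps)
  qed
  show ?thesis
    using less[of "height p t" "height p r" t r] less[of "height p r" "height p t" r t] assms
    by (cases "height p t" "height p r" rule: linorder_cases) (auto simp: cycle_key_def)
qed

lemma inj_on_cycle_key: "inj_on (cycle_key p) {..<length p}"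
proof (rule inj_onI)
  fix t r assume "t \<in> {..<length p}" "r \<in> {..<length p}" "cycle_key p t = cycle_key p r"
  then show "t = r"
    using cycle_key_le_iff[of t p r] cycle_key_le_iff[of r p t] by auto
qed

lemma low_rotate_iff:
  assumes "height p (length p) = 2" "r < length p" "i < length p" "even r" "even i"
  shows "height (rotate r p) i \<le> 0 \<longleftrightarrow> cycle_key p ((r + i) mod length p) \<le> cycle_key p r"
proof (cases "i + r < length p")
  case True
  then show ?thesis
    using height_rotate_before[of i r p] cycle_key_le_iff[of "r + i" p r] assms(2)
    by (auto simp: add.commute)
next
  case False
  define d where "d = i + r - length p"
  have i: "i = length p - r + d" and "d < r" using False assms(2,3) by (auto simp: d_def)
  have mod: "(r + i) mod length p = d" using i \<open>d < r\<close> assms(2)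
    by (simp add: mod_if)
  have "even d" using assms(4,5) even_length_of_height[OF assms(1)] False by (simp add: d_def)
  then have "even (height p d)" "even (height p r)" using even_height assms(4) by blast+
  then have "height p d + 2 \<le> height p r \<longleftrightarrow> height p d < height p r" by presburger
  moreover have "height (rotate r p) i = 2 - height p r + height p d"
    using height_rotate_after[of r p d] i \<open>d < r\<close> assms(1,2) by simp
  ultimately show ?thesis
    using cycle_key_le_iff[of d p r] \<open>d < r\<close> assms(2) by (auto simp: mod)
qed

lemma card_low_even_steps_rotate:
  assumes "height p (length p) = 2" "r < length p" "even r"
  shows "card (even_steps b (rotate r p) \<inter> low_steps (rotate r p))
           = card {t \<in> even_steps b p. cycle_key p t \<le> cycle_key p r}"
proof -
  let ?L = "length p"
  let ?Q = "\<lambda>t. even t \<and> p ! t = b \<and> cycle_key p t \<le> cycle_key p r"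
  have "even_steps b (rotate r p) \<inter> low_steps (rotate r p) = {i. i < ?L \<and> ?Q ((r + i) mod ?L)}"
    using low_rotate_iff[OF assms(1,2) _ assms(3)] even_length_of_height[OF assms(1)] assms(3)
    by (auto simp: even_steps_def low_steps_def nth_rotate even_add_mod_iff)
  moreover have "{t \<in> even_steps b p. cycle_key p t \<le> cycle_key p r} = {t. t < ?L \<and> ?Q t}"
    by (auto simp: even_steps_def)
  ultimately show ?thesis using card_rotated_indices[of ?L ?Q r] by simp
qed

lemma card_rank_eq_1:
  fixes key :: "'a \<Rightarrow> 'b::linorder"
  assumes "finite M" "inj_on key M" "1 \<le> j" "j \<le> card M"
  shows "card {r \<in> M. card {t \<in> M. key t \<le> key r} = j} = 1"
proof -
  define rank where "rank r = card {t \<in> M. key t \<le> key r}" for r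
  have rank_less: "rank u < rank v" if "u \<in> M" "v \<in> M" "key u < key v" for u v
  proof -
    have "v \<notin> {t \<in> M. key t \<le> key u}" using that by simp
    then show ?thesis
      unfolding rank_def using that assms(1) by (intro psubset_card_mono) auto
  qed
  have "inj_on rank M"
  proof (rule inj_onI)
    fix u v assume "u \<in> M" "v \<in> M" "rank u = rank v"
    then show "u = v"
      using rank_less[of u v] rank_less[of v u] assms(2) by (metis inj_on_eq_iff less_irrefl neqE)
  qed
  moreover have "rank ` M \<subseteq> {1..card M}"
    unfolding rank_def using assms(1) by (auto simp: Suc_le_eq card_gt_0_iff intro!: card_mono)
  ultimately have "rank ` M = {1..card M}"
    by (intro card_subset_eq) (auto simp: card_image)
  then obtain r where r: "r \<in> M" "rank r = j" using assms(3,4) by (metis atLeastAtMost_iff imageE)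
  then have "{r' \<in> M. rank r' = j} = {r}" using \<open>inj_on rank M\<close> by (auto dest: inj_onD)
  then show ?thesis by (simp add: rank_def)
qed

lemma finite_paths: "finite (paths n)"
proof -
  have "paths n \<subseteq> {xs. set xs \<subseteq> UNIV \<and> length xs = 2 * n}" by (auto simp: paths_def)
  then show ?thesis using finite_lists_length_eq[of "UNIV :: bool set" "2 * n"] finite_subset by auto
qed

lemma card_evens_less: "card {i. i < 2 * n \<and> even i} = n"
proof -
  have "{i. i < 2 * n \<and> even i} = (\<lambda>i. 2 * i) ` {..<n}" by (auto elim!: evenE)
  then show ?thesis by (simp add: card_image inj_on_def)
qed

lemma rotate_paths_even_steps:
  assumes "p \<in> paths n" "r < length p" "even r"
  shows "rotate r p \<in> paths n" "hd (rotate r p) = p ! r"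
    "card (even_steps b (rotate r p)) = card (even_steps b p)"
    "card (even_steps b (rotate r p) \<inter> low_steps (rotate r p))
       = card {t \<in> even_steps b p. cycle_key p t \<le> cycle_key p r}"
proof -
  have "p \<noteq> []" "height p (length p) = 2" using assms(2) height_length_paths[OF assms(1)] by auto
  then show "rotate r p \<in> paths n" "hd (rotate r p) = p ! r"
    "card (even_steps b (rotate r p)) = card (even_steps b p)"
    "card (even_steps b (rotate r p) \<inter> low_steps (rotate r p))
       = card {t \<in> even_steps b p. cycle_key p t \<le> cycle_key p r}"
    using assms rotate_in_paths hd_rotate_conv_nth[of p r] even_length_of_height
      card_even_steps_rotate[of r p b] card_low_even_steps_rotate[of p r b] by auto
qed

lemma cycle_lemma:
  assumes "1 \<le> n" "1 \<le> j" "j \<le> m"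
  shows "n * card {p \<in> paths n. hd p = b \<and> card (even_steps b p) = m
                      \<and> card (even_steps b p \<inter> low_steps p) = j}
         = card {p \<in> paths n. card (even_steps b p) = m}"
    (is "n * card ?S = card ?W")
proof -
  define pivots where
    "pivots p = {r \<in> even_steps b p. card {t \<in> even_steps b p. cycle_key p t \<le> cycle_key p r} = j}"
    for p
  define shifts where "shifts = {s. s < 2 * n \<and> even s}"
  have unrotate: "rotate (2 * n - s) (rotate s p) = p" "rotate s (rotate (2 * n - s) p) = p"
    if "length p = 2 * n" "s < 2 * n" for p :: "bool list" and s
    using that by (simp_all add: rotate_rotate)
  have "bij_betw (\<lambda>(p, r). (rotate r p, r)) (Sigma ?W pivots) (?S \<times> shifts)"
  proof (rule bij_betw_byWitness[where f' = "\<lambda>(v, s). (rotate (2 * n - s) v, s)"], goal_cases)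
    case 1 show ?case using unrotate by (auto simp: pivots_def even_steps_def paths_def)
  next
    case 2 show ?case using unrotate by (auto simp: shifts_def paths_def)
  next
    case 3 show ?case
      using rotate_paths_even_steps by (auto simp: pivots_def shifts_def even_steps_def paths_def)
  next
    case 4 show ?case
    proof (rule image_subsetI)
      fix x assume "x \<in> ?S \<times> shifts"
      then obtain v s where x: "x = (v, s)" and v: "v \<in> ?S" and s: "s \<in> shifts" by blast
      define p where "p = rotate (2 * n - s) v"
      have "length v = 2 * n" "s < 2 * n" "even s" using v s by (auto simp: paths_def shifts_def)
      moreover have "p \<in> paths n" using v rotate_in_paths by (auto simp: p_def)
      moreover have "rotate s p = v" using unrotate calculation by (simp add: p_def)
      ultimately have "p \<in> ?W \<and> s \<in> pivots p"
        using rotate_paths_even_steps[of p n s] v by (auto simp: pivots_def even_steps_def paths_def)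
      then show "(\<lambda>(v, s). (rotate (2 * n - s) v, s)) x \<in> Sigma ?W pivots" by (simp add: x p_def)
    qed
  qed
  then have "card (Sigma ?W pivots) = card ?S * n"
    by (simp add: bij_betw_same_card card_cartesian_product shifts_def card_evens_less)
  moreover have "card (Sigma ?W pivots) = card ?W"
  proof -
    have "card (pivots p) = 1" if "p \<in> ?W" for p
      unfolding pivots_def using that assms(2,3) inj_on_subset[OF inj_on_cycle_key, of "even_steps b p"]
      by (intro card_rank_eq_1) (auto simp: even_steps_def)
    then show ?thesis using finite_paths by (simp add: pivots_def even_steps_def)
  qed
  ultimately show ?thesis by simp
qed

lemma card_odds_less: "card {i. i < 2 * n \<and> odd i} = n"
proof -
  have "{i. i < 2 * n \<and> odd i} = (\<lambda>i. 2 * i + 1) ` {..<n}" by (auto elim!: oddE)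
  then show ?thesis by (simp add: card_image inj_on_def)
qed

lemma card_lists_even_odd_ups:
  "card {p. length p = 2 * n \<and> card {i. i < 2 * n \<and> even i \<and> p ! i} = a
                             \<and> card {i. i < 2 * n \<and> odd i \<and> p ! i} = c}
   = (n choose a) * (n choose c)"
proof -
  let ?ups = "\<lambda>P p. {i. i < 2 * n \<and> P i \<and> p ! i}"
  define Ev where "Ev = {i. i < 2 * n \<and> even i}"
  define Od where "Od = {i. i < 2 * n \<and> odd i}"
  have "bij_betw (\<lambda>p. (?ups even p, ?ups odd p))
          {p. length p = 2 * n \<and> card (?ups even p) = a \<and> card (?ups odd p) = c}
          ({A. A \<subseteq> Ev \<and> card A = a} \<times> {B. B \<subseteq> Od \<and> card B = c})"
  proof (rule bij_betw_byWitness[where f' = "\<lambda>(A, B). map (\<lambda>i. i \<in> A \<union> B) [0..<2 * n]"],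
      goal_cases)
    case 1 show ?case by (auto intro: nth_equalityI)
  next
    case 2 show ?case by (auto simp: Ev_def Od_def)
  next
    case 3 show ?case by (auto simp: Ev_def Od_def)
  next
    case 4
    have "?ups even (map (\<lambda>i. i \<in> A \<union> B) [0..<2 * n]) = A"
      "?ups odd (map (\<lambda>i. i \<in> A \<union> B) [0..<2 * n]) = B" if "A \<subseteq> Ev" "B \<subseteq> Od" for A B
      using that by (auto simp: Ev_def Od_def)
    then show ?case by auto
  qed
  then show ?thesis
    using n_subsets[of Ev a] n_subsets[of Od c] card_evens_less[of n] card_odds_less[of n]
    by (simp add: bij_betw_same_card card_cartesian_product Ev_def Od_def)
qed

lemma card_even_steps_down_up:
  assumes "length p = 2 * n"
  shows "card (even_steps False p) + card (even_steps True p) = n"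
proof -
  have "even_steps False p \<union> even_steps True p = {i. i < 2 * n \<and> even i}"
    using assms by (auto simp: even_steps_def)
  moreover have "card (even_steps False p \<union> even_steps True p)
                   = card (even_steps False p) + card (even_steps True p)"
    by (rule card_Un_disjoint) (auto simp: even_steps_def)
  ultimately show ?thesis using card_evens_less by simp
qed

lemma length_filter_even_odd:
  assumes "length p = 2 * n"
  shows "length (filter id p) = card (even_steps True p) + card {i. i < 2 * n \<and> odd i \<and> p ! i}"
proof -
  have "{i. i < 2 * n \<and> p ! i} = even_steps True p \<union> {i. i < 2 * n \<and> odd i \<and> p ! i}"
    using assms by (auto simp: even_steps_def)
  then show ?thesis
    using assms by (simp add: length_filter_conv_card card_Un_disjoint even_steps_def disjoint_iff)
qed

lemma card_paths_even_ups:
  assumes "1 \<le> m"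
  shows "card {p \<in> paths n. card (even_steps True p) = m} = (n choose m) * (n choose (m - 1))"
proof (cases "m \<le> n")
  case True
  have "{p \<in> paths n. card (even_steps True p) = m}
        = {p. length p = 2 * n \<and> card {i. i < 2 * n \<and> even i \<and> p ! i} = m
                               \<and> card {i. i < 2 * n \<and> odd i \<and> p ! i} = n - (m - 1)}"
    using length_filter_even_odd assms True by (auto simp: paths_def even_steps_def)
  then show ?thesis using True binomial_symmetric[of "m - 1" n] by (simp add: card_lists_even_odd_ups)
next
  case False
  then have empty: "{p \<in> paths n. card (even_steps True p) = m} = {}"
    using card_even_steps_down_up by (fastforce simp: paths_def)
  show ?thesis using False by (simp only: empty card.empty) simp
qed

lemma card_paths_even_downs:
  "card {p \<in> paths n. card (even_steps False p) = m} = (n choose m) * (n choose (m + 1))"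
proof (cases "m \<le> n")
  case True
  have "{p \<in> paths n. card (even_steps False p) = m}
        = {p. length p = 2 * n \<and> card {i. i < 2 * n \<and> even i \<and> p ! i} = n - m
                               \<and> card {i. i < 2 * n \<and> odd i \<and> p ! i} = m + 1}"
    using length_filter_even_odd card_even_steps_down_up True
    by (fastforce simp: paths_def even_steps_def)
  then show ?thesis using True binomial_symmetric[of m n] by (simp add: card_lists_even_odd_ups)
next
  case False
  then have empty: "{p \<in> paths n. card (even_steps False p) = m} = {}"
    using card_even_steps_down_up by (fastforce simp: paths_def)
  show ?thesis using False by (simp only: empty card.empty) simp
qed

lemma real_eq_divide_cancel:
  fixes X A B C n k :: nat
  assumes "n * X = A * B" "k * A = n * C" "0 < n" "0 < k"
  shows "real X = real B * real C / real k"
proof -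
  have "n * (k * X) = n * (B * C)" using assms(1,2) by (metis mult.commute mult.left_commute)
  then have "real k * real X = real B * real C" using assms(3) by (simp flip: of_nat_mult)
  then show ?thesis using assms(4) by (simp add: field_simps)
qed

theorem theorem12:
  fixes n :: nat
  assumes "n \<ge> 1"
  shows "(\<forall>k j. k > 1 \<and> 1 \<le> j \<and> j \<le> k - 1 \<longrightarrow>
            real (card {p \<in> paths n. \<not> hd p \<and> card (even_down p) = k - 1
                         \<and> card (even_down p \<inter> low_steps p) = j})
            = real (n choose k) * real ((n - 1) choose (k - 2)) / real (k - 1))
       \<and> (\<forall>k j. k \<ge> 1 \<and> 1 \<le> j \<and> j \<le> k \<longrightarrow>
            real (card {p \<in> paths n. hd p \<and> card (even_up p) = k
                         \<and> card (even_up p \<inter> low_steps p) = j})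
            = real ((n - 1) choose (k - 1)) * real (n choose (k - 1)) / real k)"
proof (intro conjI allI impI)
  fix k j :: nat assume kj: "1 < k \<and> 1 \<le> j \<and> j \<le> k - 1"
  have count: "n * card {p \<in> paths n. \<not> hd p \<and> card (even_down p) = k - 1
                    \<and> card (even_down p \<inter> low_steps p) = j} = (n choose (k - 1)) * (n choose k)"
    using cycle_lemma[OF assms, of j "k - 1" False] card_paths_even_downs[of n "k - 1"] kj
    by (simp add: even_down_eq)
  have binom: "(k - 1) * (n choose (k - 1)) = n * ((n - 1) choose (k - 2))"
    using times_binomial_minus1_eq[of "k - 1" n] kj by (simp add: numeral_2_eq_2)
  show "real (card {p \<in> paths n. \<not> hd p \<and> card (even_down p) = k - 1
                      \<and> card (even_down p \<inter> low_steps p) = j})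
            = real (n choose k) * real ((n - 1) choose (k - 2)) / real (k - 1)"
    using real_eq_divide_cancel[OF count binom] assms kj by simp
next
  fix k j :: nat assume kj: "1 \<le> k \<and> 1 \<le> j \<and> j \<le> k"
  have count: "n * card {p \<in> paths n. hd p \<and> card (even_up p) = k
                    \<and> card (even_up p \<inter> low_steps p) = j} = (n choose k) * (n choose (k - 1))"
    using cycle_lemma[OF assms, of j k True] card_paths_even_ups[of k n] kj
    by (simp add: even_up_eq)
  have binom: "k * (n choose k) = n * ((n - 1) choose (k - 1))"
    using times_binomial_minus1_eq[of k n] kj by simp
  show "real (card {p \<in> paths n. hd p \<and> card (even_up p) = k
                      \<and> card (even_up p \<inter> low_steps p) = j})
            = real ((n - 1) choose (k - 1)) * real (n choose (k - 1)) / real k"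
    using real_eq_divide_cancel[OF count binom] assms kj by (simp add: mult.commute)
qed

end
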